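(* Let $\Sigma,\Gamma$ be finite alphabets, each with at least two letters, and let $w \in \Sigma^*$. If there exist an injective morphism $h:\Sigma^*\to\Gamma^*$, a word $x\in\Gamma^*$ and a rational $r\ge 1$ such that $h(w) = x^r$ and $|x|_a = 1$ for some letter $a\in\Gamma$, then $\mathrm{E}_{\mathcal{I}}(w) = \infty$.
   Context: $|x|_a$ is the number of occurrences of the letter $a$ in $x$. For a nonempty word $v$ and integer $p\ge 0$, $v^{p/|v|}$ denotes the prefix of length $p$ of $vvv\cdots$. For a nonempty finite word $u$, $\mathrm{E}(u) = \sup\{ r \in \mathbb{Q} : u = v^r \text{ for some nonempty } v\}$. $\mathcal{I}$ is the set of injective morphisms $\Sigma^* \to \Gamma^*$ and $\mathrm{E}_{\mathcal{I}}(w) = \sup\{\mathrm{E}(h(w)) : h \in \mathcal{I}\}$. *)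

theory Defs
  imports Complex_Main "HOL-Library.Extended_Real"
begin

definition word_morphism :: "('a list \<Rightarrow> 'b list) \<Rightarrow> bool" where
  "word_morphism h \<longleftrightarrow> (\<forall>u v. h (u @ v) = h u @ h v)"

definition inj_morphisms :: "('a list \<Rightarrow> 'b list) set" where
  "inj_morphisms = {h. word_morphism h \<and> inj h}"

text \<open>v^(p/|v|): the prefix of length p of vvv...\<close>
definition pref_pow :: "'a list \<Rightarrow> nat \<Rightarrow> 'a list" where
  "pref_pow v p = map (\<lambda>i. v ! (i mod length v)) [0..<p]"

definition is_rpow :: "'a list \<Rightarrow> 'a list \<Rightarrow> rat \<Rightarrow> bool" where
  "is_rpow u v r \<longleftrightarrow> v \<noteq> [] \<and>
     (\<exists>p::nat. r = of_nat p / of_nat (length v) \<and> u = pref_pow v p)"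

definition exponent :: "'a list \<Rightarrow> ereal" where
  "exponent u = Sup {ereal (real_of_rat r) | r. \<exists>v. is_rpow u v r}"

definition exponent_I :: "'b itself \<Rightarrow> 'a list \<Rightarrow> ereal" where
  "exponent_I _ w = (SUP h \<in> (inj_morphisms :: ('a list \<Rightarrow> 'b list) set). exponent (h w))"

end

theory Submission
  imports Defs
begin

text \<open>Write \<open>x = y a z\<close> with \<open>a\<close> occurring neither in \<open>y\<close> nor in \<open>z\<close>. The morphism that fixes
  every letter except \<open>a\<close> and sends \<open>a\<close> to \<open>a (z y a)\<^sup>N\<close> is injective, since the image of each
  letter begins with that letter. It sends \<open>x\<close> to \<open>x\<^sup>N\<^sup>+\<^sup>1\<close> and every prefix of \<open>x\<close> to a power of
  \<open>x\<close> followed by that same prefix, so it sends \<open>x\<^sup>r\<close>, \<open>r \<ge> 1\<close>, to a power of \<open>x\<close> of exponent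
  at least \<open>N + 1\<close>. Composing it with \<open>h\<close> gives injective morphisms under which the exponent of
  the image of \<open>w\<close> is unbounded.\<close>

lemma length_pref_pow [simp]: "length (pref_pow x p) = p"
  by (simp add: pref_pow_def)

lemma pref_pow_le_length: "q \<le> length x \<Longrightarrow> pref_pow x q = take q x"
  by (rule nth_equalityI) (auto simp: pref_pow_def)

lemma pref_pow_length_add:
  assumes "x \<noteq> []"
  shows "pref_pow x (length x + m) = x @ pref_pow x m"
proof (rule nth_equalityI)
  fix i assume "i < length (pref_pow x (length x + m))"
  then show "pref_pow x (length x + m) ! i = (x @ pref_pow x m) ! i"
    using assms by (cases "i < length x") (auto simp: pref_pow_def nth_append le_mod_geq)
qed simp

lemma pref_pow_mult_add:
  "x \<noteq> [] \<Longrightarrow> pref_pow x (k * length x + m) = concat (replicate k x) @ pref_pow x m"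
  by (induction k) (simp_all add: pref_pow_length_add add.assoc)

lemma pref_pow_div_mod:
  assumes "x \<noteq> []"
  shows "pref_pow x p = concat (replicate (p div length x) x) @ take (p mod length x) x"
proof -
  have "p mod length x \<le> length x"
    using assms by (simp add: less_imp_le)
  then show ?thesis
    using pref_pow_mult_add[OF assms, of "p div length x" "p mod length x"]
    by (simp add: pref_pow_le_length)
qed

lemma exponent_pref_pow_ge:
  assumes "x \<noteq> []"
  shows "ereal (real p / real (length x)) \<le> exponent (pref_pow x p)"
proof -
  let ?r = "of_nat p / of_nat (length x) :: rat"
  have "is_rpow (pref_pow x p) x ?r"
    using assms unfolding is_rpow_def by blast
  then have "ereal (real_of_rat ?r) \<le> exponent (pref_pow x p)"
    unfolding exponent_def by (intro Sup_upper) blast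
  then show ?thesis
    by (simp add: of_rat_divide)
qed

lemma word_morphism_comp:
  "word_morphism g \<Longrightarrow> word_morphism h \<Longrightarrow> word_morphism (g \<circ> h)"
  by (simp add: word_morphism_def)

lemma inj_morphisms_comp:
  "g \<in> inj_morphisms \<Longrightarrow> h \<in> inj_morphisms \<Longrightarrow> g \<circ> h \<in> inj_morphisms"
  by (simp add: inj_morphisms_def word_morphism_comp inj_compose)

definition letter_morphism :: "('a \<Rightarrow> 'b list) \<Rightarrow> 'a list \<Rightarrow> 'b list" where
  "letter_morphism f u = concat (map f u)"

lemma letter_morphism_append:
  "letter_morphism f (u @ v) = letter_morphism f u @ letter_morphism f v"
  by (simp add: letter_morphism_def)

lemma letter_morphism_concat_replicate:
  "letter_morphism f (concat (replicate k u)) = concat (replicate k (letter_morphism f u))"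
  by (induction k) (simp_all add: letter_morphism_def)

lemma inj_letter_morphism:
  assumes starts: "\<And>c. \<exists>t. f c = c # t"
  shows "inj (letter_morphism f)"
proof -
  have "letter_morphism f u = letter_morphism f v \<Longrightarrow> u = v" for u v
  proof (induction u arbitrary: v)
    case Nil
    then show ?case
      using starts[of "hd v"] by (cases v) (auto simp: letter_morphism_def)
  next
    case (Cons c u)
    obtain d v' where v: "v = d # v'"
      using Cons.prems starts[of c] by (cases v) (auto simp: letter_morphism_def)
    obtain s t where "f c = c # s" "f d = d # t"
      using starts by blast
    with Cons.prems v have "c = d"
      by (simp add: letter_morphism_def)
    with Cons.prems v have "letter_morphism f u = letter_morphism f v'"
      by (simp add: letter_morphism_def)
    with Cons.IH v \<open>c = d\<close> show ?case
      by simp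
  qed
  then show ?thesis
    by (rule injI)
qed

lemma letter_morphism_in_inj_morphisms:
  "(\<And>c. \<exists>t. f c = c # t) \<Longrightarrow> letter_morphism f \<in> inj_morphisms"
  by (simp add: inj_morphisms_def word_morphism_def letter_morphism_append inj_letter_morphism)

definition pump :: "'a \<Rightarrow> 'a list \<Rightarrow> 'a list \<Rightarrow> 'a list" where
  "pump a t = letter_morphism (\<lambda>c. if c = a then a # t else [c])"

lemma pump_in_inj_morphisms: "pump a t \<in> inj_morphisms"
  unfolding pump_def by (rule letter_morphism_in_inj_morphisms) simp

lemma pump_append: "pump a t (u @ v) = pump a t u @ pump a t v"
  by (simp add: pump_def letter_morphism_append)

lemma pump_concat_replicate: "pump a t (concat (replicate k u)) = concat (replicate k (pump a t u))"
  by (simp add: pump_def letter_morphism_concat_replicate)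

lemma pump_Cons: "pump a t (c # u) = (if c = a then a # t else [c]) @ pump a t u"
  by (simp add: pump_def letter_morphism_def)

lemma pump_notin: "a \<notin> set u \<Longrightarrow> pump a t u = u"
  by (induction u) (auto simp: pump_def letter_morphism_def)

lemma concat_replicate_shift: "u @ concat (replicate N (v @ u)) = concat (replicate N (u @ v)) @ u"
  by (induction N) auto

lemma pump_take:
  assumes x: "x = y @ a # z" and y: "a \<notin> set y" and z: "a \<notin> set z" and q: "q \<le> length x"
  shows "pump a (concat (replicate N (z @ y @ [a]))) (take q x)
    = concat (replicate (if q \<le> length y then 0 else N) x) @ take q x"
proof (cases "q \<le> length y")
  case True
  then have "a \<notin> set (take q x)"
    using x y by (auto dest: in_set_takeD)
  with True show ?thesis
    by (simp add: pump_notin)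
next
  case False
  then obtain t where t: "q = length y + Suc t"
    by (metis add_Suc_right less_imp_Suc_add not_le)
  then have take_x: "take q x = (y @ [a]) @ take t z"
    using x by simp
  have "a \<notin> set (take t z)"
    using z by (auto dest: in_set_takeD)
  then have "pump a (concat (replicate N (z @ y @ [a]))) (take q x)
      = (y @ [a]) @ concat (replicate N (z @ (y @ [a]))) @ take t z"
    unfolding take_x using y by (simp add: pump_append pump_notin pump_Cons)
  also have "\<dots> = concat (replicate N ((y @ [a]) @ z)) @ (y @ [a]) @ take t z"
    using concat_replicate_shift[of "y @ [a]" N z] by (metis append_assoc)
  also have "\<dots> = concat (replicate N x) @ take q x"
    using x take_x by simp
  finally show ?thesis
    using False by simp
qed

lemma concat_replicate_mult:
  "concat (replicate k (concat (replicate m u))) = concat (replicate (k * m) u)"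
  by (induction k) (simp_all add: replicate_add)

lemma pump_pref_pow:
  assumes x: "x = y @ a # z" and y: "a \<notin> set y" and z: "a \<notin> set z"
  obtains P where "pump a (concat (replicate N (z @ y @ [a]))) (pref_pow x p) = pref_pow x P"
    and "p div length x * Suc N * length x \<le> P"
proof -
  let ?g = "pump a (concat (replicate N (z @ y @ [a])))"
  define k where "k = p div length x"
  define q where "q = p mod length x"
  define j where "j = (if q \<le> length y then 0 else N)"
  have "x \<noteq> []" "q \<le> length x" "\<not> length x \<le> length y"
    using x by (simp_all add: q_def less_imp_le)
  then have "?g x = concat (replicate N x) @ x"
    using pump_take[OF x y z order_refl, of N] by simp
  also have "\<dots> = concat (replicate (Suc N) x)"
    using concat_replicate_shift[of x N "[]"] by simp
  finally have gx: "?g x = concat (replicate (Suc N) x)" .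
  have "?g (pref_pow x p) = ?g (concat (replicate k x)) @ ?g (take q x)"
    using \<open>x \<noteq> []\<close> by (simp add: pref_pow_div_mod k_def q_def pump_append)
  also have "\<dots> = concat (replicate (k * Suc N) x) @ concat (replicate j x) @ take q x"
    using pump_take[OF x y z \<open>q \<le> length x\<close>, of N]
    by (simp only: pump_concat_replicate gx concat_replicate_mult j_def)
  also have "\<dots> = concat (replicate (k * Suc N + j) x) @ take q x"
    by (simp add: replicate_add)
  also have "\<dots> = pref_pow x ((k * Suc N + j) * length x + q)"
    using \<open>x \<noteq> []\<close> \<open>q \<le> length x\<close> by (simp add: pref_pow_mult_add pref_pow_le_length)
  finally show ?thesis
    by (rule that) (simp add: k_def add_mult_distrib)
qed

lemma exponent_pump_pref_pow_ge:
  assumes x: "x = y @ a # z" and y: "a \<notin> set y" and z: "a \<notin> set z"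
    and p: "length x \<le> p"
  shows "ereal (real (Suc N)) \<le> exponent (pump a (concat (replicate N (z @ y @ [a]))) (pref_pow x p))"
proof -
  obtain P where gp: "pump a (concat (replicate N (z @ y @ [a]))) (pref_pow x p) = pref_pow x P"
    and P: "p div length x * Suc N * length x \<le> P"
    using pump_pref_pow[OF x y z] by blast
  have "x \<noteq> []"
    using x by simp
  with p have "1 \<le> p div length x"
    by (simp add: div_greater_zero_iff Suc_leI)
  then have "Suc N * length x \<le> P"
    using P by (metis le_trans mult.assoc mult_1 mult_le_mono1)
  then have "real (Suc N) * real (length x) \<le> real P"
    by (metis of_nat_le_iff of_nat_mult)
  with \<open>x \<noteq> []\<close> have "ereal (real (Suc N)) \<le> ereal (real P / real (length x))"
    by (simp add: le_divide_eq)
  also have "\<dots> \<le> exponent (pref_pow x P)"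
    using \<open>x \<noteq> []\<close> by (rule exponent_pref_pow_ge)
  finally show ?thesis
    unfolding gp .
qed

theorem lemma7:
  fixes w :: "'a::finite list"
    and h :: "'a list \<Rightarrow> 'b::finite list"
    and x :: "'b list"
    and r :: rat
    and a :: 'b
  assumes "card (UNIV :: 'a set) \<ge> 2" and "card (UNIV :: 'b set) \<ge> 2"
    and "h \<in> inj_morphisms"
    and "r \<ge> 1"
    and "is_rpow (h w) x r"
    and "count_list x a = 1"
  shows "exponent_I TYPE('b) w = \<infinity>"
proof -
  from assms(5) obtain p where "x \<noteq> []" and "r = of_nat p / of_nat (length x)"
    and hw: "h w = pref_pow x p"
    unfolding is_rpow_def by blast
  with assms(4) have p: "length x \<le> p"
    by (simp add: le_divide_eq)
  obtain y z where x: "x = y @ a # z" and y: "a \<notin> set y" and z: "a \<notin> set z"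
    using assms(6) split_list_first[of a x] by (fastforce simp: count_list_0_iff)
  have "\<exists>g \<in> inj_morphisms :: ('a list \<Rightarrow> 'b list) set. ereal (real N) \<le> exponent (g w)" for N
  proof
    let ?g = "pump a (concat (replicate N (z @ y @ [a]))) \<circ> h"
    show "?g \<in> inj_morphisms"
      using pump_in_inj_morphisms assms(3) by (rule inj_morphisms_comp)
    have "ereal (real N) \<le> ereal (real (Suc N))"
      by simp
    also have "\<dots> \<le> exponent (?g w)"
      using exponent_pump_pref_pow_ge[OF x y z p] hw by simp
    finally show "ereal (real N) \<le> exponent (?g w)" .
  qed
  then show ?thesis
    unfolding exponent_I_def by (rule SUP_PInfty)
qed

end
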